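(* The total wave-fluid potential vorticity obeys $$(\partial_t+\mathcal{L}_{\widehat{\mathbf{v}}})\Big(\mathrm{curl}\,\widehat{\mathbf{v}}+\nabla\widetilde{w}\times\nabla\zeta\Big)\cdot d\mathbf{S}=-\nabla\rho^{-1}\times\nabla p\cdot d\mathbf{S}.$$ Introducing a stream function $\psi$ with $\widehat{\mathbf{v}}=\widehat{\mathbf{z}}\times\nabla\psi$, the 2D Laplacian $\Delta$ and the Jacobian $J(a,b):=\widehat{\mathbf{z}}\cdot\nabla a\times\nabla b$, this reads $$\partial_tq+J(\psi,q)=-J(\rho^{-1},\nabla p),\qquad q:=\Delta\psi+J(\widetilde{w},\zeta).$$
   Context: On a free surface $z=\zeta(\mathbf{x},t)$ over horizontal coordinates $\mathbf{x}=(x,y)$, the WCIFS (wave-current interaction on a free surface) equations govern the horizontal velocity $\widehat{\mathbf{v}}$, areal density $D$ (constrained to $D=1$ by the pressure $p$, so $\mathrm{div}\,\widehat{\mathbf{v}}=0$), buoyancy $\rho$, elevation $\zeta$ and vertical velocity $\widehat{w}$: $(\partial_t+\mathcal{L}_{\widehat{\mathbf{v}}})(\widehat{\mathbf{v}}\cdot d\mathbf{x}+\widetilde{w}\,d\zeta)=d\varpi-\frac1\rho dp$; $\partial_tD+\mathrm{div}(D\widehat{\mathbf{v}})=0$; $\partial_t\rho+\widehat{\mathbf{v}}\cdot\nabla\rho=0$; $\partial_t\zeta+\widehat{\mathbf{v}}\cdot\nabla\zeta=\widehat{w}(1+\epsilon|\nabla\zeta|^2)$; $\partial_t\widetilde{w}+\widehat{\mathbf{v}}\cdot\nabla\widetilde{w}=-g+\frac{2\epsilon}{D\rho}\mathrm{div}(\widehat{w}\,\widetilde{\mu}\,\nabla\zeta)$,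 with $\varpi=\tfrac12(|\widehat{\mathbf{v}}|^2+\widehat{w}^2)-g\zeta$, $\widetilde{\mu}=D\rho\widetilde{w}$, $\widetilde{w}=\widehat{w}/(1+\epsilon|\nabla\zeta|^2)$. $\mathcal{L}_{\widehat{\mathbf{v}}}$ is the Lie derivative along $\widehat{\mathbf{v}}$. *)

theory Defs
  imports "HOL-Analysis.Analysis"
begin

text \<open>Scalar fields on space-time: f t x y, with t time and (x,y) horizontal coordinates.\<close>
type_synonym field = "real \<Rightarrow> real \<Rightarrow> real \<Rightarrow> real"

definition pt :: "field \<Rightarrow> field" where
  "pt f = (\<lambda>t x y. deriv (\<lambda>s. f s x y) t)"
definition px :: "field \<Rightarrow> field" where
  "px f = (\<lambda>t x y. deriv (\<lambda>s. f t s y) x)"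
definition py :: "field \<Rightarrow> field" where
  "py f = (\<lambda>t x y. deriv (\<lambda>s. f t x s) y)"

fun Ck :: "nat \<Rightarrow> field \<Rightarrow> bool" where
  "Ck 0 f = continuous_on UNIV (\<lambda>(t, x, y). f t x y)"
| "Ck (Suc k) f = (continuous_on UNIV (\<lambda>(t, x, y). f t x y) \<and>
     (\<forall>t x y. (\<lambda>s. f s x y) differentiable (at t) \<and>
              (\<lambda>s. f t s y) differentiable (at x) \<and>
              (\<lambda>s. f t x s) differentiable (at y)) \<and>
     Ck k (pt f) \<and> Ck k (px f) \<and> Ck k (py f))"

definition smooth :: "field \<Rightarrow> bool" where
  "smooth f = (\<forall>k. Ck k f)"

definition adv :: "field \<Rightarrow> field \<Rightarrow> field \<Rightarrow> field" where
  "adv u1 u2 f = (\<lambda>t x y. u1 t x y * px f t x y + u2 t x y * py f t x y)"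

text \<open>Lie derivative along v=(u1,u2) of the 1-form a1 dx + a2 dy, x- and y-components.\<close>
definition lie1x :: "field \<Rightarrow> field \<Rightarrow> field \<Rightarrow> field \<Rightarrow> field" where
  "lie1x u1 u2 a1 a2 = (\<lambda>t x y. adv u1 u2 a1 t x y + a1 t x y * px u1 t x y + a2 t x y * px u2 t x y)"
definition lie1y :: "field \<Rightarrow> field \<Rightarrow> field \<Rightarrow> field \<Rightarrow> field" where
  "lie1y u1 u2 a1 a2 = (\<lambda>t x y. adv u1 u2 a2 t x y + a1 t x y * py u1 t x y + a2 t x y * py u2 t x y)"

text \<open>Lie derivative along v=(u1,u2) of the 2-form f dS (coefficient of dS = dx wedge dy).\<close>
definition lie2 :: "field \<Rightarrow> field \<Rightarrow> field \<Rightarrow> field" where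
  "lie2 u1 u2 f = (\<lambda>t x y. adv u1 u2 f t x y + f t x y * (px u1 t x y + py u2 t x y))"

definition curl :: "field \<Rightarrow> field \<Rightarrow> field" where
  "curl u1 u2 = (\<lambda>t x y. px u2 t x y - py u1 t x y)"
definition jac :: "field \<Rightarrow> field \<Rightarrow> field" where
  "jac a b = (\<lambda>t x y. px a t x y * py b t x y - py a t x y * px b t x y)"
definition lap :: "field \<Rightarrow> field" where
  "lap f = (\<lambda>t x y. px (px f) t x y + py (py f) t x y)"

end

theory Submission
  imports Defs
begin

(* The momentum equation is an identity between 1-forms; taking its curl gives one between
   2-forms. For smooth fields mixed partials commute (Schwarz), so the curl commutes with the
   time derivative and with the Lie derivative; moreover the curl of v.dx + wtil dzeta is
   curl v + J(wtil, zeta), the curl of the gradient of varpi vanishes and the curl of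
   rho^-1 grad p is J(rho^-1, p). For v = z x grad psi one has curl v = Lap psi and div v = 0,
   so the Lie derivative of the 2-form is plain advection, i.e. J(psi, .). *)

lemma real_field_differentiable_iff:
  "(f :: real \<Rightarrow> real) field_differentiable (at x) \<longleftrightarrow> f differentiable (at x)"
  by (simp add: field_differentiable_def real_differentiable_def)

lemma second_difference_mean_value:
  fixes F Fx Fxy :: "real \<Rightarrow> real \<Rightarrow> real"
  assumes Fx: "\<And>a b. ((\<lambda>s. F s b) has_real_derivative Fx a b) (at a)"
    and Fxy: "\<And>a b. ((\<lambda>s. Fx a s) has_real_derivative Fxy a b) (at b)"
    and "h > 0"
  obtains a b where "x < a" "a < x + h" "y < b" "b < y + h"
    and "F (x + h) (y + h) - F (x + h) y - F x (y + h) + F x y = h\<^sup>2 * Fxy a b"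
proof -
  have "\<exists>a. x < a \<and> a < x + h \<and>
      (F (x + h) (y + h) - F (x + h) y) - (F x (y + h) - F x y) =
        (x + h - x) * (Fx a (y + h) - Fx a y)"
    by (rule MVT2) (use \<open>h > 0\<close> in \<open>auto intro: DERIV_diff Fx\<close>)
  then obtain a where "x < a" "a < x + h"
    and "(F (x + h) (y + h) - F (x + h) y) - (F x (y + h) - F x y) =
      h * (Fx a (y + h) - Fx a y)"
    by auto
  moreover obtain b where "y < b" "b < y + h" and "Fx a (y + h) - Fx a y = h * Fxy a b"
    using MVT2[of y "y + h" "Fx a" "Fxy a"] \<open>h > 0\<close> Fxy by auto
  ultimately show thesis
    by (intro that[of a b]) (simp_all add: power2_eq_square algebra_simps)
qed

lemma isCont_eq_if_equal_nearby:
  fixes f g :: "'a::metric_space \<Rightarrow> 'b::metric_space"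
  assumes "isCont f z" "isCont g z"
    and nearby: "\<And>e. e > 0 \<Longrightarrow> \<exists>p q. dist p z < e \<and> dist q z < e \<and> f p = g q"
  shows "f z = g z"
proof (rule ccontr)
  assume "f z \<noteq> g z"
  define e where "e = dist (f z) (g z) / 2"
  have "e > 0" using \<open>f z \<noteq> g z\<close> by (simp add: e_def)
  obtain df where "df > 0" and df: "\<And>p. dist p z < df \<Longrightarrow> dist (f p) (f z) < e"
    using \<open>isCont f z\<close> \<open>e > 0\<close> unfolding continuous_at_eps_delta by blast
  obtain dg where "dg > 0" and dg: "\<And>q. dist q z < dg \<Longrightarrow> dist (g q) (g z) < e"
    using \<open>isCont g z\<close> \<open>e > 0\<close> unfolding continuous_at_eps_delta by blast
  obtain p q where "dist p z < min df dg" "dist q z < min df dg" "f p = g q"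
    using nearby[of "min df dg"] \<open>df > 0\<close> \<open>dg > 0\<close> by auto
  then have "dist (f z) (g z) < 2 * e"
    using df[of p] dg[of q] dist_triangle3[of "f z" "g z" "f p"] by (simp add: dist_commute)
  then show False by (simp add: e_def)
qed

lemma mixed_partials_eq:
  fixes F Fx Fy Fxy Fyx :: "real \<Rightarrow> real \<Rightarrow> real"
  assumes Fx: "\<And>a b. ((\<lambda>s. F s b) has_real_derivative Fx a b) (at a)"
    and Fy: "\<And>a b. ((\<lambda>s. F a s) has_real_derivative Fy a b) (at b)"
    and Fxy: "\<And>a b. ((\<lambda>s. Fx a s) has_real_derivative Fxy a b) (at b)"
    and Fyx: "\<And>a b. ((\<lambda>s. Fy s b) has_real_derivative Fyx a b) (at a)"
    and "isCont (\<lambda>(a, b). Fxy a b) (x, y)" "isCont (\<lambda>(a, b). Fyx a b) (x, y)"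
  shows "Fxy x y = Fyx x y"
proof -
  have "\<exists>p q. dist p (x, y) < e \<and> dist q (x, y) < e \<and>
      (\<lambda>(a, b). Fxy a b) p = (\<lambda>(a, b). Fyx a b) q" if "e > 0" for e
  proof -
    define h where "h = e / 2"
    have "h > 0" using \<open>e > 0\<close> by (simp add: h_def)
    obtain a b where ab: "x < a" "a < x + h" "y < b" "b < y + h"
      and a_b: "F (x + h) (y + h) - F (x + h) y - F x (y + h) + F x y = h\<^sup>2 * Fxy a b"
      using second_difference_mean_value[OF Fx Fxy \<open>h > 0\<close>] by blast
    \<comment> \<open>the same second difference, expanded in the other order (MVT for the transpose of F)\<close>
    obtain b' a' where ab': "y < b'" "b' < y + h" "x < a'" "a' < x + h"
      and "F (x + h) (y + h) - F x (y + h) - F (x + h) y + F x y = h\<^sup>2 * Fyx a' b'"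
      using second_difference_mean_value[of "\<lambda>a b. F b a" "\<lambda>a b. Fy b a" "\<lambda>a b. Fyx b a",
          OF Fy Fyx \<open>h > 0\<close>]
      by blast
    with a_b have "h\<^sup>2 * Fxy a b = h\<^sup>2 * Fyx a' b'" by (simp add: algebra_simps)
    with \<open>h > 0\<close> have "Fxy a b = Fyx a' b'" by simp
    moreover have "dist (c, d) (x, y) < e" if "x < c" "c < x + h" "y < d" "d < y + h" for c d
    proof -
      have "dist (c, d) (x, y) \<le> dist c x + dist d y"
        using norm_Pair_le[of "c - x" "d - y"] by (simp add: dist_norm)
      then show ?thesis using that by (simp add: h_def dist_real_def)
    qed
    ultimately show ?thesis using ab ab' by (intro exI[of _ "(a, b)"] exI[of _ "(a', b')"]) auto
  qed
  from isCont_eq_if_equal_nearby[OF assms(5,6) this] show ?thesis by simp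
qed

definition partially_differentiable :: "field \<Rightarrow> bool" where
  "partially_differentiable f \<longleftrightarrow> (\<forall>t x y.
     (\<lambda>s. f s x y) differentiable (at t) \<and>
     (\<lambda>s. f t s y) differentiable (at x) \<and>
     (\<lambda>s. f t x s) differentiable (at y))"

lemma Ck_Suc_iff:
  "Ck (Suc k) f \<longleftrightarrow> continuous_on UNIV (\<lambda>(t, x, y). f t x y) \<and> partially_differentiable f \<and>
     Ck k (pt f) \<and> Ck k (px f) \<and> Ck k (py f)"
  by (simp add: partially_differentiable_def)

declare Ck.simps(2) [simp del]

lemma partials_const:
  "pt (\<lambda>t x y. c) = (\<lambda>t x y. 0)" "px (\<lambda>t x y. c) = (\<lambda>t x y. 0)" "py (\<lambda>t x y. c) = (\<lambda>t x y. 0)"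
  by (simp_all add: pt_def px_def py_def)

lemma partials_add:
  assumes "partially_differentiable f" "partially_differentiable g"
  shows "pt (\<lambda>t x y. f t x y + g t x y) = (\<lambda>t x y. pt f t x y + pt g t x y)"
    and "px (\<lambda>t x y. f t x y + g t x y) = (\<lambda>t x y. px f t x y + px g t x y)"
    and "py (\<lambda>t x y. f t x y + g t x y) = (\<lambda>t x y. py f t x y + py g t x y)"
  using assms
  by (simp_all add: pt_def px_def py_def partially_differentiable_def real_field_differentiable_iff)

lemma partials_diff:
  assumes "partially_differentiable f" "partially_differentiable g"
  shows "pt (\<lambda>t x y. f t x y - g t x y) = (\<lambda>t x y. pt f t x y - pt g t x y)"
    and "px (\<lambda>t x y. f t x y - g t x y) = (\<lambda>t x y. px f t x y - px g t x y)"
    and "py (\<lambda>t x y. f t x y - g t x y) = (\<lambda>t x y. py f t x y - py g t x y)"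
  using assms
  by (simp_all add: pt_def px_def py_def partially_differentiable_def real_field_differentiable_iff)

lemma partials_minus:
  assumes "partially_differentiable f"
  shows "pt (\<lambda>t x y. - f t x y) = (\<lambda>t x y. - pt f t x y)"
    and "px (\<lambda>t x y. - f t x y) = (\<lambda>t x y. - px f t x y)"
    and "py (\<lambda>t x y. - f t x y) = (\<lambda>t x y. - py f t x y)"
  using assms
  by (simp_all add: pt_def px_def py_def partially_differentiable_def real_field_differentiable_iff)

lemma partials_mult:
  assumes "partially_differentiable f" "partially_differentiable g"
  shows "pt (\<lambda>t x y. f t x y * g t x y) = (\<lambda>t x y. f t x y * pt g t x y + pt f t x y * g t x y)"
    and "px (\<lambda>t x y. f t x y * g t x y) = (\<lambda>t x y. f t x y * px g t x y + px f t x y * g t x y)"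
    and "py (\<lambda>t x y. f t x y * g t x y) = (\<lambda>t x y. f t x y * py g t x y + py f t x y * g t x y)"
  using assms
  by (simp_all add: pt_def px_def py_def partially_differentiable_def real_field_differentiable_iff)

lemma partials_inverse:
  assumes "partially_differentiable f" "\<forall>t x y. f t x y \<noteq> 0"
  shows "pt (\<lambda>t x y. 1 / f t x y) = (\<lambda>t x y. - pt f t x y / (f t x y)\<^sup>2)"
    and "px (\<lambda>t x y. 1 / f t x y) = (\<lambda>t x y. - px f t x y / (f t x y)\<^sup>2)"
    and "py (\<lambda>t x y. 1 / f t x y) = (\<lambda>t x y. - py f t x y / (f t x y)\<^sup>2)"
  using assms
  by (simp_all add: pt_def px_def py_def partially_differentiable_def real_field_differentiable_iff)

lemma partially_differentiable_const: "partially_differentiable (\<lambda>t x y. c)"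
  by (simp add: partially_differentiable_def)

lemma partially_differentiable_add:
  "partially_differentiable f \<Longrightarrow> partially_differentiable g \<Longrightarrow>
   partially_differentiable (\<lambda>t x y. f t x y + g t x y)"
  by (simp add: partially_differentiable_def)

lemma partially_differentiable_mult:
  "partially_differentiable f \<Longrightarrow> partially_differentiable g \<Longrightarrow>
   partially_differentiable (\<lambda>t x y. f t x y * g t x y)"
  by (simp add: partially_differentiable_def)

lemma partially_differentiable_inverse:
  "partially_differentiable f \<Longrightarrow> \<forall>t x y. f t x y \<noteq> 0 \<Longrightarrow>
   partially_differentiable (\<lambda>t x y. 1 / f t x y)"
  unfolding partially_differentiable_def real_field_differentiable_iff[symmetric]
  by (auto intro!: field_differentiable_divide)

lemma Ck_Suc_imp_Ck: "Ck (Suc k) f \<Longrightarrow> Ck k f"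
proof (induction k arbitrary: f)
  case 0
  then show ?case by (simp add: Ck_Suc_iff)
next
  case (Suc k)
  then show ?case unfolding Ck_Suc_iff[of "Suc k"] Ck_Suc_iff[of k] by blast
qed

lemma Ck_const: "Ck k (\<lambda>t x y. c)"
  by (induction k arbitrary: c) (simp_all add: Ck_Suc_iff partials_const partially_differentiable_const)

lemma Ck_add: "Ck k f \<Longrightarrow> Ck k g \<Longrightarrow> Ck k (\<lambda>t x y. f t x y + g t x y)"
proof (induction k arbitrary: f g)
  case 0
  then show ?case by (auto simp: case_prod_unfold intro: continuous_intros)
next
  case (Suc k)
  then show ?case
    unfolding Ck_Suc_iff
    by (auto simp: partials_add partially_differentiable_add case_prod_unfold
        intro: continuous_intros)
qed

lemma Ck_mult: "Ck k f \<Longrightarrow> Ck k g \<Longrightarrow> Ck k (\<lambda>t x y. f t x y * g t x y)"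
proof (induction k arbitrary: f g)
  case 0
  then show ?case
    using continuous_on_mult[of UNIV "\<lambda>(t, x, y). f t x y" "\<lambda>(t, x, y). g t x y"]
    by (simp add: case_prod_unfold)
next
  case (Suc k)
  have "Ck k f" "Ck k g" using Suc.prems Ck_Suc_imp_Ck by blast+
  have product_rule: "Ck k (\<lambda>t x y. f t x y * h2 t x y + h1 t x y * g t x y)"
    if "Ck k h1" "Ck k h2" for h1 h2
    by (rule Ck_add[OF Suc.IH[OF \<open>Ck k f\<close> that(2)] Suc.IH[OF that(1) \<open>Ck k g\<close>]])
  have "continuous_on UNIV (\<lambda>(t, x, y). f t x y * g t x y)"
    using Suc.prems
      continuous_on_mult[of UNIV "\<lambda>(t, x, y). f t x y" "\<lambda>(t, x, y). g t x y"]
    by (simp add: Ck_Suc_iff case_prod_unfold)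
  moreover have "partially_differentiable f" "partially_differentiable g"
    using Suc.prems by (simp_all add: Ck_Suc_iff)
  ultimately show ?case
    using Suc.prems
    unfolding Ck_Suc_iff partials_mult[OF \<open>partially_differentiable f\<close> \<open>partially_differentiable g\<close>]
    by (simp add: product_rule partially_differentiable_mult)
qed

lemma Ck_inverse:
  "Ck k f \<Longrightarrow> \<forall>t x y. f t x y \<noteq> 0 \<Longrightarrow> Ck k (\<lambda>t x y. 1 / f t x y)"
proof (induction k arbitrary: f)
  case 0
  then show ?case
    using continuous_on_divide[of UNIV "\<lambda>_. 1" "\<lambda>(t, x, y). f t x y"]
    by (simp add: case_prod_unfold)
next
  case (Suc k)
  have "Ck k (\<lambda>t x y. 1 / f t x y)" using Suc Ck_Suc_imp_Ck by blast
  have quotient_rule: "Ck k (\<lambda>t x y. - (h t x y / (f t x y)\<^sup>2))" if "Ck k h" for h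
  proof -
    have "Ck k (\<lambda>t x y. (-1) * h t x y * (1 / f t x y) * (1 / f t x y))"
      using that \<open>Ck k (\<lambda>t x y. 1 / f t x y)\<close> by (intro Ck_mult Ck_const)
    then show ?thesis by (simp add: power2_eq_square)
  qed
  have "continuous_on UNIV (\<lambda>(t, x, y). 1 / f t x y)"
    using Suc.prems continuous_on_divide[of UNIV "\<lambda>_. 1" "\<lambda>(t, x, y). f t x y"]
    by (simp add: Ck_Suc_iff case_prod_unfold)
  moreover have "partially_differentiable f" using Suc.prems by (simp add: Ck_Suc_iff)
  ultimately show ?case
    using Suc.prems
    unfolding Ck_Suc_iff partials_inverse[OF \<open>partially_differentiable f\<close> Suc.prems(2)]
    by (simp add: quotient_rule partially_differentiable_inverse)
qed

lemma smooth_partials [simp]: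
  assumes "smooth f"
  shows "smooth (pt f)" "smooth (px f)" "smooth (py f)"
  using assms unfolding smooth_def by (meson Ck_Suc_iff)+

lemma smooth_imp_partially_differentiable [simp]: "smooth f \<Longrightarrow> partially_differentiable f"
  unfolding smooth_def by (meson Ck_Suc_iff)

lemma smooth_imp_continuous: "smooth f \<Longrightarrow> continuous_on UNIV (\<lambda>(t, x, y). f t x y)"
  unfolding smooth_def by (metis Ck.simps(1))

lemma smooth_const [simp]: "smooth (\<lambda>t x y. c)"
  by (simp add: smooth_def Ck_const)

lemma smooth_add [simp]: "smooth f \<Longrightarrow> smooth g \<Longrightarrow> smooth (\<lambda>t x y. f t x y + g t x y)"
  by (simp add: smooth_def Ck_add)

lemma smooth_mult [simp]: "smooth f \<Longrightarrow> smooth g \<Longrightarrow> smooth (\<lambda>t x y. f t x y * g t x y)"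
  by (simp add: smooth_def Ck_mult)

lemma smooth_inverse [simp]:
  "smooth f \<Longrightarrow> \<forall>t x y. f t x y \<noteq> 0 \<Longrightarrow> smooth (\<lambda>t x y. 1 / f t x y)"
  by (simp add: smooth_def Ck_inverse)

lemma smooth_minus [simp]: "smooth f \<Longrightarrow> smooth (\<lambda>t x y. - f t x y)"
  using smooth_mult[OF smooth_const[of "-1"]] by simp

lemma smooth_diff [simp]: "smooth f \<Longrightarrow> smooth g \<Longrightarrow> smooth (\<lambda>t x y. f t x y - g t x y)"
  using smooth_add[of f "\<lambda>t x y. - g t x y"] by simp

lemma smooth_divide [simp]:
  "smooth f \<Longrightarrow> smooth g \<Longrightarrow> \<forall>t x y. g t x y \<noteq> 0 \<Longrightarrow> smooth (\<lambda>t x y. f t x y / g t x y)"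
  using smooth_mult[OF _ smooth_inverse, of f g] by simp

lemma smooth_power2 [simp]: "smooth f \<Longrightarrow> smooth (\<lambda>t x y. (f t x y)\<^sup>2)"
  using smooth_mult[of f f] by (simp add: power2_eq_square)

lemma has_real_derivative_partials:
  assumes "smooth f"
  shows "((\<lambda>s. f s x y) has_real_derivative pt f t x y) (at t)"
    and "((\<lambda>s. f t s y) has_real_derivative px f t x y) (at x)"
    and "((\<lambda>s. f t x s) has_real_derivative py f t x y) (at y)"
  using smooth_imp_partially_differentiable[OF assms]
  by (simp_all add: partially_differentiable_def pt_def px_def py_def
      DERIV_deriv_iff_real_differentiable)

lemma isCont_slices:
  assumes "smooth f"
  shows "isCont (\<lambda>(a, b). f t a b) (x, y)" "isCont (\<lambda>(a, b). f a b y) (t, x)"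
    and "isCont (\<lambda>(a, b). f a x b) (t, y)"
proof -
  have cont: "isCont (\<lambda>(t, x, y). f t x y) p" for p
    using smooth_imp_continuous[OF assms] continuous_on_eq_continuous_at[OF open_UNIV] by blast
  have "isCont (\<lambda>p. (t, fst p, snd p)) (x, y)" "isCont (\<lambda>p. (fst p, snd p, y)) (t, x)"
    and "isCont (\<lambda>p. (fst p, x, snd p)) (t, y)"
    by (intro continuous_intros)+
  from this[THEN isCont_o2, OF cont] show
    "isCont (\<lambda>(a, b). f t a b) (x, y)" "isCont (\<lambda>(a, b). f a b y) (t, x)"
    "isCont (\<lambda>(a, b). f a x b) (t, y)"
    by (simp_all add: case_prod_unfold)
qed

lemma py_px_commute [simp]: "smooth f \<Longrightarrow> py (px f) = px (py f)"
proof (intro ext)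
  fix t x y
  assume "smooth f"
  show "py (px f) t x y = px (py f) t x y"
    by (rule mixed_partials_eq[where F = "\<lambda>a b. f t a b" and Fx = "\<lambda>a b. px f t a b"
          and Fy = "\<lambda>a b. py f t a b"])
      (simp_all add: \<open>smooth f\<close> has_real_derivative_partials isCont_slices)
qed

lemma pt_px_commute [simp]: "smooth f \<Longrightarrow> pt (px f) = px (pt f)"
proof (intro ext)
  fix t x y
  assume "smooth f"
  show "pt (px f) t x y = px (pt f) t x y"
    by (rule mixed_partials_eq[where F = "\<lambda>a b. f a b y" and Fx = "\<lambda>a b. pt f a b y"
          and Fy = "\<lambda>a b. px f a b y", symmetric])
      (simp_all add: \<open>smooth f\<close> has_real_derivative_partials isCont_slices)
qed

lemma pt_py_commute [simp]: "smooth f \<Longrightarrow> pt (py f) = py (pt f)"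
proof (intro ext)
  fix t x y
  assume "smooth f"
  show "pt (py f) t x y = py (pt f) t x y"
    by (rule mixed_partials_eq[where F = "\<lambda>a b. f a x b" and Fx = "\<lambda>a b. pt f a x b"
          and Fy = "\<lambda>a b. py f a x b", symmetric])
      (simp_all add: \<open>smooth f\<close> has_real_derivative_partials isCont_slices)
qed

lemmas partials_rules = partials_const partials_add partials_diff partials_minus partials_mult

lemma curl_diff:
  assumes "smooth a1" "smooth a2" "smooth b1" "smooth b2"
  shows "curl (\<lambda>t x y. a1 t x y - b1 t x y) (\<lambda>t x y. a2 t x y - b2 t x y) =
    (\<lambda>t x y. curl a1 a2 t x y - curl b1 b2 t x y)"
  using assms by (simp add: curl_def partials_rules algebra_simps)

lemma curl_grad: "smooth f \<Longrightarrow> curl (px f) (py f) = (\<lambda>t x y. 0)"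
  by (simp add: curl_def)

lemma curl_mult_grad:
  "smooth r \<Longrightarrow> smooth p \<Longrightarrow>
   curl (\<lambda>t x y. r t x y * px p t x y) (\<lambda>t x y. r t x y * py p t x y) = jac r p"
  by (simp add: curl_def jac_def partials_rules)

lemma curl_add_mult_grad:
  assumes "smooth u1" "smooth u2" "smooth w" "smooth z"
  shows "curl (\<lambda>t x y. u1 t x y + w t x y * px z t x y)
              (\<lambda>t x y. u2 t x y + w t x y * py z t x y) =
    (\<lambda>t x y. curl u1 u2 t x y + jac w z t x y)"
  using assms by (simp add: curl_def jac_def partials_rules algebra_simps)

lemma curl_pt_lie1:
  assumes "smooth u1" "smooth u2" "smooth a1" "smooth a2"
  shows "curl (\<lambda>t x y. pt a1 t x y + lie1x u1 u2 a1 a2 t x y)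
              (\<lambda>t x y. pt a2 t x y + lie1y u1 u2 a1 a2 t x y) t x y =
    pt (curl a1 a2) t x y + lie2 u1 u2 (curl a1 a2) t x y"
  using assms
  by (simp add: curl_def lie1x_def lie1y_def lie2_def adv_def partials_rules algebra_simps)

lemma curl_stream_function:
  "smooth psi \<Longrightarrow> curl (\<lambda>t x y. - py psi t x y) (px psi) = lap psi"
  by (simp add: curl_def lap_def partials_rules)

lemma lie2_stream_function:
  "smooth psi \<Longrightarrow> lie2 (\<lambda>t x y. - py psi t x y) (px psi) f = jac psi f"
  by (simp add: lie2_def adv_def jac_def partials_rules)

lemma potential_vorticity_equation:
  fixes u1 u2 w z varpi p rho :: field
  assumes smooth: "smooth u1" "smooth u2" "smooth w" "smooth z" "smooth varpi" "smooth p" "smooth rho"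
    and rho_nz: "\<forall>t x y. rho t x y \<noteq> 0"
    and motion_x: "\<forall>t x y.
        pt (\<lambda>t x y. u1 t x y + w t x y * px z t x y) t x y
        + lie1x u1 u2 (\<lambda>t x y. u1 t x y + w t x y * px z t x y)
                      (\<lambda>t x y. u2 t x y + w t x y * py z t x y) t x y
        = px varpi t x y - px p t x y / rho t x y"
    and motion_y: "\<forall>t x y.
        pt (\<lambda>t x y. u2 t x y + w t x y * py z t x y) t x y
        + lie1y u1 u2 (\<lambda>t x y. u1 t x y + w t x y * px z t x y)
                      (\<lambda>t x y. u2 t x y + w t x y * py z t x y) t x y
        = py varpi t x y - py p t x y / rho t x y"
  shows "pt (\<lambda>t x y. curl u1 u2 t x y + jac w z t x y) t x y
    + lie2 u1 u2 (\<lambda>t x y. curl u1 u2 t x y + jac w z t x y) t x y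
    = - jac (\<lambda>t x y. 1 / rho t x y) p t x y"
proof -
  define a1 where "a1 = (\<lambda>t x y. u1 t x y + w t x y * px z t x y)"
  define a2 where "a2 = (\<lambda>t x y. u2 t x y + w t x y * py z t x y)"
  define r where "r = (\<lambda>t x y. 1 / rho t x y)"
  have smooth_a: "smooth a1" "smooth a2" and smooth_r: "smooth r"
    using smooth rho_nz by (simp_all add: a1_def a2_def r_def)
  have "(\<lambda>t x y. pt a1 t x y + lie1x u1 u2 a1 a2 t x y) =
      (\<lambda>t x y. px varpi t x y - r t x y * px p t x y)"
    and "(\<lambda>t x y. pt a2 t x y + lie1y u1 u2 a1 a2 t x y) =
      (\<lambda>t x y. py varpi t x y - r t x y * py p t x y)"
    using motion_x motion_y by (simp_all add: a1_def a2_def r_def)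
  then have "pt (curl a1 a2) t x y + lie2 u1 u2 (curl a1 a2) t x y =
      curl (\<lambda>t x y. px varpi t x y - r t x y * px p t x y)
           (\<lambda>t x y. py varpi t x y - r t x y * py p t x y) t x y"
    using curl_pt_lie1[OF smooth(1,2) smooth_a] by simp
  also have "\<dots> = curl (px varpi) (py varpi) t x y
      - curl (\<lambda>t x y. r t x y * px p t x y) (\<lambda>t x y. r t x y * py p t x y) t x y"
    using smooth smooth_r by (simp add: curl_diff)
  also have "\<dots> = - jac r p t x y"
    using smooth smooth_r by (simp add: curl_grad curl_mult_grad)
  finally show ?thesis
    using curl_add_mult_grad[OF smooth(1-4)] by (simp add: a1_def a2_def r_def)
qed

lemma vorticity_equation_stream_function:
  assumes "smooth psi" and stream: "\<forall>t x y. u1 t x y = - py psi t x y \<and> u2 t x y = px psi t x y"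
    and vorticity: "\<And>t x y. pt (\<lambda>t x y. curl u1 u2 t x y + q t x y) t x y
      + lie2 u1 u2 (\<lambda>t x y. curl u1 u2 t x y + q t x y) t x y = F t x y"
  shows "pt (\<lambda>t x y. lap psi t x y + q t x y) t x y
    + jac psi (\<lambda>t x y. lap psi t x y + q t x y) t x y = F t x y"
proof -
  from stream have "u1 = (\<lambda>t x y. - py psi t x y)" "u2 = px psi" by (auto intro!: ext)
  with vorticity[of t x y] show ?thesis
    by (simp add: curl_stream_function lie2_stream_function \<open>smooth psi\<close>)
qed

theorem mainTheorem6:
  fixes u1 u2 D rho zeta what wtil p :: field and eps g :: real
  assumes smooth: "smooth u1" "smooth u2" "smooth D" "smooth rho" "smooth zeta"
      "smooth what" "smooth wtil" "smooth p"
    and rho_nz: "\<forall>t x y. rho t x y \<noteq> 0"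
    and D_one: "\<forall>t x y. D t x y = 1"
    and wtil_def: "\<forall>t x y. wtil t x y =
        what t x y / (1 + eps * ((px zeta t x y)\<^sup>2 + (py zeta t x y)\<^sup>2))"
    and motion_x: "\<forall>t x y.
        pt (\<lambda>t x y. u1 t x y + wtil t x y * px zeta t x y) t x y
        + lie1x u1 u2 (\<lambda>t x y. u1 t x y + wtil t x y * px zeta t x y)
                      (\<lambda>t x y. u2 t x y + wtil t x y * py zeta t x y) t x y
        = px (\<lambda>t x y. ((u1 t x y)\<^sup>2 + (u2 t x y)\<^sup>2 + (what t x y)\<^sup>2) / 2 - g * zeta t x y) t x y
          - px p t x y / rho t x y"
    and motion_y: "\<forall>t x y.
        pt (\<lambda>t x y. u2 t x y + wtil t x y * py zeta t x y) t x y
        + lie1y u1 u2 (\<lambda>t x y. u1 t x y + wtil t x y * px zeta t x y)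
                      (\<lambda>t x y. u2 t x y + wtil t x y * py zeta t x y) t x y
        = py (\<lambda>t x y. ((u1 t x y)\<^sup>2 + (u2 t x y)\<^sup>2 + (what t x y)\<^sup>2) / 2 - g * zeta t x y) t x y
          - py p t x y / rho t x y"
    and continuity: "\<forall>t x y. pt D t x y + px (\<lambda>t x y. D t x y * u1 t x y) t x y
        + py (\<lambda>t x y. D t x y * u2 t x y) t x y = 0"
    and buoyancy: "\<forall>t x y. pt rho t x y + adv u1 u2 rho t x y = 0"
    and elevation: "\<forall>t x y. pt zeta t x y + adv u1 u2 zeta t x y =
        what t x y * (1 + eps * ((px zeta t x y)\<^sup>2 + (py zeta t x y)\<^sup>2))"
    and vertical: "\<forall>t x y. pt wtil t x y + adv u1 u2 wtil t x y =
        - g + 2 * eps / (D t x y * rho t x y) *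
          (px (\<lambda>t x y. what t x y * (D t x y * rho t x y * wtil t x y) * px zeta t x y) t x y
         + py (\<lambda>t x y. what t x y * (D t x y * rho t x y * wtil t x y) * py zeta t x y) t x y)"
  shows "(\<forall>t x y.
            pt (\<lambda>t x y. curl u1 u2 t x y + jac wtil zeta t x y) t x y
          + lie2 u1 u2 (\<lambda>t x y. curl u1 u2 t x y + jac wtil zeta t x y) t x y
          = - jac (\<lambda>t x y. 1 / rho t x y) p t x y)
       \<and> (\<forall>psi. smooth psi \<and> (\<forall>t x y. u1 t x y = - py psi t x y \<and> u2 t x y = px psi t x y) \<longrightarrow>
            (\<forall>t x y.
               pt (\<lambda>t x y. lap psi t x y + jac wtil zeta t x y) t x y
             + jac psi (\<lambda>t x y. lap psi t x y + jac wtil zeta t x y) t x y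
             = - jac (\<lambda>t x y. 1 / rho t x y) p t x y))"
proof -
  have "smooth (\<lambda>t x y. ((u1 t x y)\<^sup>2 + (u2 t x y)\<^sup>2 + (what t x y)\<^sup>2) / 2 - g * zeta t x y)"
    using smooth by simp
  note vorticity =
    potential_vorticity_equation[OF smooth(1,2,7,5) this smooth(8,4) rho_nz motion_x motion_y]
  show ?thesis
    using vorticity vorticity_equation_stream_function[OF _ _ vorticity] by blast
qed

end
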